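(* Let $n\ge1$ and let $\alpha$ be a composition with $\bm{l}(\alpha)\le n$. Write $M_\alpha=\sum_\gamma\tilde K_{\alpha,\gamma}\,\mathcal{S}_\gamma$ in $\mathit{QSym}_n$, the sum over compositions $\gamma$ with $\bm{l}(\gamma)\le n$ (the $\mathcal{S}_\gamma$ with $\bm{l}(\gamma)\le n$ form a basis of $\mathit{QSym}_n$). Then $\tilde K_{\alpha,\alpha}=1$, and $\tilde K_{\alpha,\gamma}=0$ whenever $\alpha\prec\gamma$.
   Context: Let $\mathbf{x}=\{x_1,\dots,x_n\}$. A composition is a finite sequence $\alpha=(\alpha_1,\dots,\alpha_k)$ of positive integers with length $\bm{l}(\alpha)=k$. $\mathit{QSym}_n$ is the ring of quasisymmetric polynomials in $\mathbf{x}$ over $\mathbb{Q}$: those $f$ such that for every composition $(\alpha_1,\dots,\alpha_k)$ with $k\le n$ the coefficient of $x_1^{\alpha_1}\cdots x_k^{\alpha_k}$ equals that of $x_{i_1}^{\alpha_1}\cdots x_{i_k}^{\alpha_k}$ for all $i_1<\dots<i_k$. $M_\alpha=\sum_{1\le i_1<\dots<i_k\le n}x_{i_1}^{\alpha_1}\cdots x_{i_k}^{\alpha_k}$. Composition tableaux: the diagram of $\alpha$ has $\alpha_i$ cells in row $i$ (from the top, cells $(i,j)$ in matrix notation); a composition tableau of shape $\alpha$ is a filling $T$ by positive integers with (CT1) rows weakly decreasing left to right; (CT2) leftmost column strictly increasing top to bottom; (CT3) for cells $(i,k),(j,k)$ of the diagram with $i<j$: if $\alpha_i\ge\alpha_j$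 (and $k\ge2$) then $T(j,k)<T(i,k)$ or $T(i,k-1)<T(j,k)$; if $\alpha_i<\alpha_j$ then $T(j,k)<T(i,k)$ or $T(i,k)<T(j,k+1)$. With $x^T=\prod_i x_i^{\#\{\text{entries equal to }i\}}$, the quasisymmetric Schur polynomial is $\mathcal{S}_\alpha(x_1,\dots,x_n)=\sum_T x^T$ over composition tableaux of shape $\alpha$ with entries in $\{1,\dots,n\}$. Revlex order: $\bm\lambda(\alpha)$ is the partition obtained by sorting the parts of $\alpha$ decreasingly; partitions are compared lexicographically ($\lambda>_{\mathrm{lex}}\mu$ iff the first nonzero entry of $\lambda-\mu$ is positive). For compositions $\alpha,\gamma$ of the same size, $\alpha\succ\gamma$ iff either $\bm\lambda(\alpha)>_{\mathrm{lex}}\bm\lambda(\gamma)$, or $\bm\lambda(\alpha)=\bm\lambda(\gamma)$ and $\alpha$ is lexicographically larger than $\gamma$ when both are read from right to left; $\alpha\prec\gamma$ means $\gamma\succ\alpha$. (E.g. $4\succ13\succ31\succ22\succ112\succ121\succ211\succ1111$.) *)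

theory Defs
  imports Complex_Main
begin

text \<open>Variables x_1..x_n are indexed 0..n-1. A polynomial in x_1..x_n over Q
  is represented by its coefficient function on exponent vectors e :: nat \<Rightarrow> nat
  (e m = exponent of x_(m+1)).
  Rows/columns of diagrams are 0-based.\<close>

definition is_comp :: "nat list \<Rightarrow> bool" where
  "is_comp \<alpha> \<longleftrightarrow> (\<forall>a\<in>set \<alpha>. 0 < a)"

text \<open>Coefficient of x^e in the monomial quasisymmetric polynomial M_alpha(x_1..x_n):
  number of index sequences i_1 < ... < i_k < n with x_(i_1)^alpha_1...x_(i_k)^alpha_k = x^e.\<close>
definition M_coeff :: "nat \<Rightarrow> nat list \<Rightarrow> (nat \<Rightarrow> nat) \<Rightarrow> nat" where
  "M_coeff n \<alpha> e = card {is. length is = length \<alpha> \<and> sorted_wrt (<) is \<and> (\<forall>i\<in>set is. i < n)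
      \<and> (\<forall>m. e m = (\<Sum>j<length \<alpha>. if is ! j = m then \<alpha> ! j else 0))}"

definition cells :: "nat list \<Rightarrow> (nat \<times> nat) set" where
  "cells \<alpha> = {(i, j). i < length \<alpha> \<and> j < \<alpha> ! i}"

definition comp_tableaux :: "nat \<Rightarrow> nat list \<Rightarrow> (nat \<Rightarrow> nat \<Rightarrow> nat) set" where
  "comp_tableaux n \<alpha> = {T.
     (\<forall>i j. (i, j) \<notin> cells \<alpha> \<longrightarrow> T i j = 0)
   \<and> (\<forall>i j. (i, j) \<in> cells \<alpha> \<longrightarrow> 1 \<le> T i j \<and> T i j \<le> n)
   \<and> (\<forall>i j. i < length \<alpha> \<and> Suc j < \<alpha> ! i \<longrightarrow> T i (Suc j) \<le> T i j)
   \<and> (\<forall>i i'. i < i' \<and> i' < length \<alpha> \<longrightarrow> T i 0 < T i' 0)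
   \<and> (\<forall>i j k. i < j \<and> j < length \<alpha> \<and> k < \<alpha> ! i \<and> k < \<alpha> ! j \<longrightarrow>
        ((\<alpha> ! j \<le> \<alpha> ! i \<and> 1 \<le> k \<longrightarrow> T j k < T i k \<or> T i (k - 1) < T j k)
       \<and> (\<alpha> ! i < \<alpha> ! j \<longrightarrow> T j k < T i k \<or> T i k < T j (Suc k))))}"

text \<open>Coefficient of x^e in the quasisymmetric Schur polynomial S_alpha(x_1..x_n).\<close>
definition S_coeff :: "nat \<Rightarrow> nat list \<Rightarrow> (nat \<Rightarrow> nat) \<Rightarrow> nat" where
  "S_coeff n \<alpha> e = card {T \<in> comp_tableaux n \<alpha>.
      \<forall>m. e m = card {c \<in> cells \<alpha>. case_prod T c = Suc m}}"

definition part_of :: "nat list \<Rightarrow> nat list" where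
  "part_of \<alpha> = rev (sort \<alpha>)"

definition nth0 :: "nat list \<Rightarrow> nat \<Rightarrow> nat" where
  "nth0 l i = (if i < length l then l ! i else 0)"

definition lex_gt :: "nat list \<Rightarrow> nat list \<Rightarrow> bool" where
  "lex_gt l m \<longleftrightarrow> (\<exists>k. (\<forall>i<k. nth0 l i = nth0 m i) \<and> nth0 m k < nth0 l k)"

definition revlex_gt :: "nat list \<Rightarrow> nat list \<Rightarrow> bool" where
  "revlex_gt \<alpha> \<gamma> \<longleftrightarrow> is_comp \<alpha> \<and> is_comp \<gamma> \<and> sum_list \<alpha> = sum_list \<gamma> \<and>
     (lex_gt (part_of \<alpha>) (part_of \<gamma>) \<or>
      (part_of \<alpha> = part_of \<gamma> \<and> lex_gt (rev \<alpha>) (rev \<gamma>)))"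

text \<open>K is a (finitely supported) coefficient family expressing M_alpha in the basis
  S_gamma, l(gamma) \<le> n, of QSym_n.\<close>
definition M_expansion :: "nat \<Rightarrow> nat list \<Rightarrow> (nat list \<Rightarrow> rat) \<Rightarrow> bool" where
  "M_expansion n \<alpha> K \<longleftrightarrow> finite {\<gamma>. K \<gamma> \<noteq> 0}
     \<and> (\<forall>\<gamma>. K \<gamma> \<noteq> 0 \<longrightarrow> is_comp \<gamma> \<and> length \<gamma> \<le> n)
     \<and> (\<forall>e. of_nat (M_coeff n \<alpha> e) = (\<Sum>\<gamma>\<in>{\<gamma>. K \<gamma> \<noteq> 0}. K \<gamma> * of_nat (S_coeff n \<gamma> e)))"

end

theory Submission
  imports Defs
begin

text \<open>Write \<open>A \<gamma> \<delta>\<close> for the coefficient of \<open>x^\<delta>\<close> in \<open>S_\<gamma>\<close>. Both sides of the expansion are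
  quasisymmetric, so it amounts to the finite linear system \<open>\<Sum>\<^sub>\<gamma> K \<gamma> A \<gamma> \<delta> = [\<delta> = \<alpha>]\<close>
  over compositions \<open>\<delta>\<close>. The matrix \<open>A\<close> is unitriangular for \<open>\<succ>\<close>, which yields existence,
  uniqueness and triangularity of \<open>K\<close> at once. Since the entries of a column of a composition
  tableau are distinct, its content is dominated by its shape, which rules out
  \<open>\<lambda>(\<delta>) >\<^sub>l\<^sub>e\<^sub>x \<lambda>(\<gamma>)\<close> when \<open>A \<gamma> \<delta> \<noteq> 0\<close>. If \<open>\<lambda>(\<delta>) = \<lambda>(\<gamma>)\<close>, the first column is
  \<open>1, 2, \<dots>\<close>, so row \<open>i\<close> only contains letters \<open>\<le> i + 1\<close>; reading the rows bottom up,
  each row is filled with its own index as long as content and shape agree, so at the first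
  difference \<open>\<delta>\<close> has the smaller part. In particular the only tableau of shape \<open>\<gamma>\<close> and
  content \<open>\<gamma>\<close> is the one with row \<open>i\<close> filled with \<open>i + 1\<close>, whence \<open>A \<gamma> \<gamma> = 1\<close>.\<close>

lemma lex_gt_irrefl: "\<not> lex_gt l l"
  unfolding lex_gt_def by auto

lemma lex_gt_trans:
  assumes "lex_gt l m" "lex_gt m p"
  shows "lex_gt l p"
proof -
  obtain k1 where k1: "\<forall>i<k1. nth0 l i = nth0 m i" "nth0 m k1 < nth0 l k1"
    using assms(1) unfolding lex_gt_def by blast
  obtain k2 where k2: "\<forall>i<k2. nth0 m i = nth0 p i" "nth0 p k2 < nth0 m k2"
    using assms(2) unfolding lex_gt_def by blast
  show ?thesis
    unfolding lex_gt_def using k1 k2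
    by (cases k1 k2 rule: linorder_cases) (intro exI[of _ "min k1 k2"]; force)+
qed

lemma lex_gt_cases: "lex_gt l m \<or> lex_gt m l \<or> nth0 l = nth0 m"
proof (rule disjCI)
  assume "\<not> (lex_gt m l \<or> nth0 l = nth0 m)"
  then have ex: "\<exists>i. nth0 l i \<noteq> nth0 m i" and "\<not> lex_gt m l" by auto
  define k where "k = (LEAST i. nth0 l i \<noteq> nth0 m i)"
  have "nth0 l k \<noteq> nth0 m k"
    unfolding k_def by (rule LeastI_ex[OF ex])
  moreover have "\<forall>i<k. nth0 l i = nth0 m i"
    unfolding k_def using not_less_Least by blast
  ultimately show "lex_gt l m"
    using \<open>\<not> lex_gt m l\<close> unfolding lex_gt_def by (metis linorder_neqE_nat)
qed

lemma nth0_eq_imp_eq: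
  assumes "is_comp l" "is_comp m" "nth0 l = nth0 m"
  shows "l = m"
proof -
  have "0 < nth0 l i \<longleftrightarrow> i < length l" "0 < nth0 m i \<longleftrightarrow> i < length m" for i
    using assms(1,2) unfolding is_comp_def nth0_def by auto
  then have "\<not> length l < length m" "\<not> length m < length l"
    using assms(3) by (metis less_irrefl)+
  then have "length l = length m" by simp
  then show ?thesis
  proof (rule nth_equalityI)
    show "l ! i = m ! i" if "i < length l" for i
      using fun_cong[OF assms(3), of i] that \<open>length l = length m\<close> by (simp add: nth0_def)
  qed
qed

lemma revlex_gt_irrefl: "\<not> revlex_gt \<alpha> \<alpha>"
  unfolding revlex_gt_def using lex_gt_irrefl by auto

lemma revlex_gt_trans: "revlex_gt \<alpha> \<beta> \<Longrightarrow> revlex_gt \<beta> \<gamma> \<Longrightarrow> revlex_gt \<alpha> \<gamma>"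
  unfolding revlex_gt_def by (metis lex_gt_trans)

lemma wf_on_finite_strict_order:
  assumes "finite C" "\<And>x. \<not> R x x" "transp R"
  shows "wf {(x, y). x \<in> C \<and> y \<in> C \<and> R x y}"
proof (rule finite_acyclic_wf)
  let ?r = "{(x, y). x \<in> C \<and> y \<in> C \<and> R x y}"
  show "finite ?r"
    by (rule finite_subset[OF _ finite_cartesian_product[OF assms(1) assms(1)]]) auto
  have "R x y" if "(x, y) \<in> ?r\<^sup>+" for x y
    using that by (induction rule: trancl_induct) (use transpD[OF assms(3)] in blast)+
  then show "acyclic ?r"
    unfolding acyclic_def using assms(2) by blast
qed

definition unitriangular_on :: "'a set \<Rightarrow> ('a \<Rightarrow> 'a \<Rightarrow> bool) \<Rightarrow> ('a \<Rightarrow> 'a \<Rightarrow> 'b::{zero,one}) \<Rightarrow> bool" where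
  "unitriangular_on C R A \<longleftrightarrow> (\<forall>\<gamma>\<in>C. A \<gamma> \<gamma> = 1) \<and> (\<forall>\<gamma>\<in>C. \<forall>\<delta>\<in>C. A \<gamma> \<delta> \<noteq> 0 \<longrightarrow> \<gamma> = \<delta> \<or> R \<delta> \<gamma>)"

lemma unitriangular_onD:
  assumes "unitriangular_on C R A" "\<gamma> \<in> C"
  shows "A \<gamma> \<gamma> = 1" and "\<delta> \<in> C \<Longrightarrow> A \<gamma> \<delta> \<noteq> 0 \<Longrightarrow> \<gamma> = \<delta> \<or> R \<delta> \<gamma>"
  using assms unfolding unitriangular_on_def by blast+

lemma unitriangular_kernel:
  fixes A :: "'a \<Rightarrow> 'a \<Rightarrow> 'b::comm_ring_1"
  assumes fin: "finite C" and irrefl: "\<And>x. \<not> R x x" and trans: "transp R"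
    and A: "unitriangular_on C R A"
    and sub: "E \<subseteq> C" and up_closed: "\<And>\<gamma> \<gamma>'. \<gamma> \<in> E \<Longrightarrow> \<gamma>' \<in> C \<Longrightarrow> R \<gamma> \<gamma>' \<Longrightarrow> \<gamma>' \<in> E"
    and eq: "\<And>\<epsilon>. \<epsilon> \<in> E \<Longrightarrow> (\<Sum>\<gamma>\<in>C. K \<gamma> * A \<gamma> \<epsilon>) = 0"
  shows "\<gamma> \<in> E \<Longrightarrow> K \<gamma> = 0"
proof -
  have "transp (\<lambda>x y. R y x)"
    using trans by (auto simp: transp_def)
  with fin irrefl have "wf {(x, y). x \<in> C \<and> y \<in> C \<and> R y x}"
    by (rule wf_on_finite_strict_order)
  then show "\<gamma> \<in> E \<Longrightarrow> K \<gamma> = 0"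
  proof (induction \<gamma> rule: wf_induct_rule)
    case (less g)
    have gC: "g \<in> C" using less(2) sub by blast
    have "K \<gamma> * A \<gamma> g = 0" if "\<gamma> \<in> C - {g}" for \<gamma>
    proof (cases "A \<gamma> g = 0")
      case False
      then have "R g \<gamma>" using unitriangular_onD(2)[OF A] that gC by blast
      then show ?thesis using less that gC up_closed by auto
    qed simp
    then have "(\<Sum>\<gamma>\<in>C. K \<gamma> * A \<gamma> g) = K g"
      using fin gC unitriangular_onD(1)[OF A gC] by (simp add: sum.remove)
    then show ?case using eq[OF less(2)] by simp
  qed
qed

lemma unitriangular_solvable:
  fixes A :: "'a \<Rightarrow> 'a \<Rightarrow> 'b::comm_ring_1"
  assumes fin: "finite C" and irrefl: "\<And>x. \<not> R x x" and trans: "transp R"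
    and A: "unitriangular_on C R A"
  shows "\<delta> \<in> C \<Longrightarrow> \<exists>K. (\<forall>\<gamma>. \<gamma> \<notin> C \<longrightarrow> K \<gamma> = 0) \<and>
           (\<forall>\<epsilon>\<in>C. (\<Sum>\<gamma>\<in>C. K \<gamma> * A \<gamma> \<epsilon>) = (if \<epsilon> = \<delta> then 1 else 0))"
  using wf_on_finite_strict_order[OF fin irrefl trans]
proof (induction \<delta> rule: wf_induct_rule)
  case (less \<delta>)
  define D where "D = {\<epsilon>\<in>C. R \<epsilon> \<delta>}"
  have "\<forall>\<epsilon>\<in>D. \<exists>K. (\<forall>\<gamma>. \<gamma> \<notin> C \<longrightarrow> K \<gamma> = 0) \<and>
           (\<forall>\<eta>\<in>C. (\<Sum>\<gamma>\<in>C. K \<gamma> * A \<gamma> \<eta>) = (if \<eta> = \<epsilon> then 1 else 0))"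
    using less.IH \<open>\<delta> \<in> C\<close> unfolding D_def by blast
  then obtain f where f: "\<forall>\<epsilon>\<in>D. (\<forall>\<gamma>. \<gamma> \<notin> C \<longrightarrow> f \<epsilon> \<gamma> = 0) \<and>
           (\<forall>\<eta>\<in>C. (\<Sum>\<gamma>\<in>C. f \<epsilon> \<gamma> * A \<gamma> \<eta>) = (if \<eta> = \<epsilon> then 1 else 0))"
    by (auto dest!: bchoice)
  \<comment> \<open>correct the unit vector at \<open>\<delta>\<close> by the solutions for the \<open>R\<close>-smaller indices\<close>
  define K where "K \<gamma> = (if \<gamma> = \<delta> then 1 else 0) - (\<Sum>\<epsilon>\<in>D. A \<delta> \<epsilon> * f \<epsilon> \<gamma>)" for \<gamma>
  have "(\<Sum>\<gamma>\<in>C. K \<gamma> * A \<gamma> \<eta>) = (if \<eta> = \<delta> then 1 else 0)" if \<eta>: "\<eta> \<in> C" for \<eta>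
  proof -
    have "(\<Sum>\<gamma>\<in>C. (\<Sum>\<epsilon>\<in>D. A \<delta> \<epsilon> * f \<epsilon> \<gamma>) * A \<gamma> \<eta>) = (\<Sum>\<epsilon>\<in>D. A \<delta> \<epsilon> * (\<Sum>\<gamma>\<in>C. f \<epsilon> \<gamma> * A \<gamma> \<eta>))"
      by (simp add: sum_distrib_left sum_distrib_right sum.swap[of _ C D] mult.assoc)
    also have "\<dots> = (\<Sum>\<epsilon>\<in>D. A \<delta> \<epsilon> * (if \<eta> = \<epsilon> then 1 else 0))"
      using f \<eta> by (intro sum.cong) auto
    also have "\<dots> = (if \<eta> \<in> D then A \<delta> \<eta> else 0)"
      using fin unfolding D_def by (simp add: if_distrib[of "\<lambda>x. _ * x"] cong: if_cong)
    finally have "(\<Sum>\<gamma>\<in>C. K \<gamma> * A \<gamma> \<eta>) = A \<delta> \<eta> - (if \<eta> \<in> D then A \<delta> \<eta> else 0)"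
      using fin \<open>\<delta> \<in> C\<close> unfolding K_def
      by (simp add: left_diff_distrib sum_subtractf if_distrib[of "\<lambda>x. x * _"] cong: if_cong)
    then show ?thesis
      using unitriangular_onD[OF A \<open>\<delta> \<in> C\<close>] \<eta> irrefl unfolding D_def by auto
  qed
  moreover have "K \<gamma> = 0" if "\<gamma> \<notin> C" for \<gamma>
    using that f \<open>\<delta> \<in> C\<close> unfolding K_def by auto
  ultimately show ?case by blast
qed

definition content :: "nat list \<Rightarrow> (nat \<Rightarrow> nat \<Rightarrow> nat) \<Rightarrow> nat \<Rightarrow> nat" where
  "content \<gamma> T m = card {c \<in> cells \<gamma>. case_prod T c = Suc m}"

lemma S_coeff_content: "S_coeff n \<gamma> e = card {T \<in> comp_tableaux n \<gamma>. content \<gamma> T = e}"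
  unfolding S_coeff_def content_def by (intro arg_cong[where f = card] Collect_cong) (auto simp: fun_eq_iff)

lemma cells_Sigma: "cells \<gamma> = Sigma {..<length \<gamma>} (\<lambda>i. {..<\<gamma> ! i})"
  unfolding cells_def by auto

lemma finite_cells [simp]: "finite (cells \<gamma>)"
  unfolding cells_Sigma by auto

lemma card_cells: "card (cells \<gamma>) = sum_list \<gamma>"
  unfolding cells_Sigma by (simp add: card_SigmaI sum_list_sum_nth atLeast0LessThan)

lemma mem_cells [simp]: "(i, j) \<in> cells \<gamma> \<longleftrightarrow> i < length \<gamma> \<and> j < \<gamma> ! i"
  unfolding cells_def by auto

lemma comp_tableauxD:
  assumes "T \<in> comp_tableaux n \<alpha>"
  shows comp_tableaux_outside: "\<And>i j. (i, j) \<notin> cells \<alpha> \<Longrightarrow> T i j = 0"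
    and comp_tableaux_range: "\<And>i j. (i, j) \<in> cells \<alpha> \<Longrightarrow> 1 \<le> T i j \<and> T i j \<le> n"
    and comp_tableaux_row: "\<And>i j. i < length \<alpha> \<Longrightarrow> Suc j < \<alpha> ! i \<Longrightarrow> T i (Suc j) \<le> T i j"
    and comp_tableaux_first_column: "\<And>i i'. i < i' \<Longrightarrow> i' < length \<alpha> \<Longrightarrow> T i 0 < T i' 0"
    and comp_tableaux_triple_le: "\<And>i j k. i < j \<Longrightarrow> j < length \<alpha> \<Longrightarrow> k < \<alpha> ! i \<Longrightarrow> k < \<alpha> ! j \<Longrightarrow>
        \<alpha> ! j \<le> \<alpha> ! i \<Longrightarrow> 1 \<le> k \<Longrightarrow> T j k < T i k \<or> T i (k - 1) < T j k"
    and comp_tableaux_triple_less: "\<And>i j k. i < j \<Longrightarrow> j < length \<alpha> \<Longrightarrow> k < \<alpha> ! i \<Longrightarrow> k < \<alpha> ! j \<Longrightarrow>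
        \<alpha> ! i < \<alpha> ! j \<Longrightarrow> T j k < T i k \<or> T i k < T j (Suc k)"
proof -
  note defn = assms[unfolded comp_tableaux_def mem_Collect_eq]
  note outside = conjunct1[OF defn] and range = conjunct1[OF conjunct2[OF defn]]
    and row = conjunct1[OF conjunct2[OF conjunct2[OF defn]]]
    and column = conjunct1[OF conjunct2[OF conjunct2[OF conjunct2[OF defn]]]]
    and triple = conjunct2[OF conjunct2[OF conjunct2[OF conjunct2[OF defn]]]]
  show "\<And>i j. (i, j) \<notin> cells \<alpha> \<Longrightarrow> T i j = 0" using outside by blast
  show "\<And>i j. (i, j) \<in> cells \<alpha> \<Longrightarrow> 1 \<le> T i j \<and> T i j \<le> n" using range by blast
  show "\<And>i j. i < length \<alpha> \<Longrightarrow> Suc j < \<alpha> ! i \<Longrightarrow> T i (Suc j) \<le> T i j" using row by blast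
  show "\<And>i i'. i < i' \<Longrightarrow> i' < length \<alpha> \<Longrightarrow> T i 0 < T i' 0" using column by blast
  show "\<And>i j k. i < j \<Longrightarrow> j < length \<alpha> \<Longrightarrow> k < \<alpha> ! i \<Longrightarrow> k < \<alpha> ! j \<Longrightarrow>
        \<alpha> ! j \<le> \<alpha> ! i \<Longrightarrow> 1 \<le> k \<Longrightarrow> T j k < T i k \<or> T i (k - 1) < T j k"
    and "\<And>i j k. i < j \<Longrightarrow> j < length \<alpha> \<Longrightarrow> k < \<alpha> ! i \<Longrightarrow> k < \<alpha> ! j \<Longrightarrow>
        \<alpha> ! i < \<alpha> ! j \<Longrightarrow> T j k < T i k \<or> T i k < T j (Suc k)"
    using triple by (meson order_refl)+
qed

lemma comp_tableaux_row_antimono: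
  assumes "T \<in> comp_tableaux n \<gamma>" "i < length \<gamma>" "j \<le> j'" "j' < \<gamma> ! i"
  shows "T i j' \<le> T i j"
  using assms(3,4)
proof (induction j' rule: dec_induct)
  case (step m)
  then show ?case using comp_tableaux_row[OF assms(1,2), of m] by simp
qed simp

lemma comp_tableaux_column_distinct:
  assumes T: "T \<in> comp_tableaux n \<gamma>" and "i < i'" "i' < length \<gamma>" "k < \<gamma> ! i" "k < \<gamma> ! i'"
  shows "T i k \<noteq> T i' k"
proof
  assume eq: "T i k = T i' k"
  have i: "i < length \<gamma>" using assms by simp
  show False
  proof (cases "k = 0")
    case True
    then show ?thesis using comp_tableaux_first_column[OF T assms(2,3)] eq by simp
  next
    case False
    show ?thesis
    proof (cases "\<gamma> ! i' \<le> \<gamma> ! i")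
      case True
      have "T i k \<le> T i (k - 1)" using comp_tableaux_row_antimono[OF T i, of "k - 1" k] assms by simp
      then show ?thesis using comp_tableaux_triple_le[OF T assms(2-5) True] False eq by simp
    next
      case False
      then have "T i' (Suc k) \<le> T i' k" using comp_tableaux_row_antimono[OF T assms(3), of k "Suc k"] assms by simp
      then show ?thesis using comp_tableaux_triple_less[OF T assms(2-5)] False eq by simp
    qed
  qed
qed

lemma comp_tableaux_entry_content:
  assumes "T \<in> comp_tableaux n \<gamma>" "(i, j) \<in> cells \<gamma>"
  obtains m where "T i j = Suc m" "m < n" "0 < content \<gamma> T m"
proof -
  obtain m where m: "T i j = Suc m" using comp_tableaux_range[OF assms] by (cases "T i j") auto
  moreover have "m < n" using comp_tableaux_range[OF assms] m by simp
  moreover have "(i, j) \<in> {c \<in> cells \<gamma>. case_prod T c = Suc m}"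
    using assms(2) m by simp
  then have "0 < content \<gamma> T m"
    unfolding content_def using card_gt_0_iff by fastforce
  ultimately show ?thesis using that by blast
qed

lemma sum_content:
  assumes T: "T \<in> comp_tableaux n \<gamma>"
  shows "(\<Sum>m<n. content \<gamma> T m) = sum_list \<gamma>"
proof -
  have "c \<in> (\<Union>m<n. {c \<in> cells \<gamma>. case_prod T c = Suc m})" if "c \<in> cells \<gamma>" for c
  proof -
    obtain i j where c: "c = (i, j)" by fastforce
    with that obtain m where "T i j = Suc m" "m < n"
      using comp_tableaux_entry_content[OF T] by blast
    with that c show ?thesis by auto
  qed
  then have "cells \<gamma> = (\<Union>m<n. {c \<in> cells \<gamma>. case_prod T c = Suc m})" by blast
  also have "card \<dots> = (\<Sum>m<n. content \<gamma> T m)"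
    unfolding content_def by (rule card_UN_disjoint) auto
  finally have "card (cells \<gamma>) = (\<Sum>m<n. content \<gamma> T m)" .
  then show ?thesis using card_cells by simp
qed

lemma sum_nth0: "length \<epsilon> \<le> n \<Longrightarrow> (\<Sum>m<n. nth0 \<epsilon> m) = sum_list \<epsilon>"
proof -
  assume "length \<epsilon> \<le> n"
  then have "(\<Sum>m<n. nth0 \<epsilon> m) = (\<Sum>m<length \<epsilon>. nth0 \<epsilon> m)"
    by (intro sum.mono_neutral_right) (auto simp: nth0_def)
  also have "\<dots> = (\<Sum>m<length \<epsilon>. \<epsilon> ! m)"
    by (intro sum.cong) (auto simp: nth0_def)
  finally show ?thesis by (simp add: sum_list_sum_nth atLeast0LessThan)
qed

lemma comp_tableaux_content_size:
  assumes "T \<in> comp_tableaux n \<gamma>" "nth0 \<epsilon> = content \<gamma> T" "length \<epsilon> \<le> n"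
  shows "sum_list \<epsilon> = sum_list \<gamma>"
  using sum_content[OF assms(1)] sum_nth0[OF assms(3)] assms(2) by simp

lemma comp_tableaux_entry_le_length:
  assumes T: "T \<in> comp_tableaux n \<gamma>" and c: "nth0 \<epsilon> = content \<gamma> T" and "(i, j) \<in> cells \<gamma>"
  shows "1 \<le> T i j \<and> T i j \<le> length \<epsilon>"
proof -
  obtain m where m: "T i j = Suc m" "0 < content \<gamma> T m"
    using comp_tableaux_entry_content[OF T assms(3)] by blast
  then have "0 < nth0 \<epsilon> m" using c by simp
  then have "m < length \<epsilon>" unfolding nth0_def by (simp split: if_splits)
  then show ?thesis using m by simp
qed

text \<open>\<open>parts_ge l\<close> is the conjugate of the partition \<open>part_of l\<close>.\<close>
definition parts_ge :: "nat list \<Rightarrow> nat \<Rightarrow> nat" where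
  "parts_ge l w = card {i. i < length l \<and> w \<le> l ! i}"

lemma sum_eq_sum_card_less:
  fixes f :: "'a \<Rightarrow> nat"
  assumes "finite J" "\<And>j. j \<in> J \<Longrightarrow> f j \<le> W"
  shows "(\<Sum>j\<in>J. f j) = (\<Sum>col<W. card {j\<in>J. col < f j})"
proof -
  have "f j = (\<Sum>col<W. if col < f j then 1 else 0)" if "j \<in> J" for j
  proof -
    have "{..<W} \<inter> {col. col < f j} = {..<f j}" using assms(2)[OF that] by auto
    then show ?thesis by (simp add: sum.If_cases)
  qed
  then have "(\<Sum>j\<in>J. f j) = (\<Sum>j\<in>J. \<Sum>col<W. if col < f j then 1 else 0)"
    by (intro sum.cong) auto
  also have "\<dots> = (\<Sum>col<W. card {j\<in>J. col < f j})"
    using assms(1) by (subst sum.swap) (simp add: sum.If_cases Int_def conj_commute)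
  finally show ?thesis .
qed

lemma comp_tableaux_column_entries_le:
  assumes T: "T \<in> comp_tableaux n \<gamma>" and "finite J"
  shows "card {i. i < length \<gamma> \<and> col < \<gamma> ! i \<and> T i col \<in> Suc ` J}
           \<le> min (card J) (parts_ge \<gamma> (Suc col))"
proof -
  let ?I = "{i. i < length \<gamma> \<and> col < \<gamma> ! i \<and> T i col \<in> Suc ` J}"
  have "inj_on (\<lambda>i. T i col) ?I"
    by (rule inj_onI, rule ccontr) (auto dest: comp_tableaux_column_distinct[OF T] simp: neq_iff)
  then have "inj_on (\<lambda>i. T i col - 1) ?I"
    by (auto simp: inj_on_def)
  moreover have "(\<lambda>i. T i col - 1) ` ?I \<subseteq> J" by auto
  ultimately have "card ?I \<le> card J"
    using assms(2) by (rule card_inj_on_le)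
  moreover have "card ?I \<le> parts_ge \<gamma> (Suc col)"
    unfolding parts_ge_def by (intro card_mono) auto
  ultimately show ?thesis by simp
qed

lemma comp_tableaux_card_entries_in:
  assumes T: "T \<in> comp_tableaux n \<gamma>" and c: "nth0 \<epsilon> = content \<gamma> T" and J: "J \<subseteq> {..<length \<epsilon>}"
  shows "card {c \<in> cells \<gamma>. case_prod T c \<in> Suc ` J} = (\<Sum>j\<in>J. \<epsilon> ! j)"
proof -
  have finJ: "finite J" using J by (rule finite_subset) simp
  have "{c \<in> cells \<gamma>. case_prod T c \<in> Suc ` J} = (\<Union>j\<in>J. {c \<in> cells \<gamma>. case_prod T c = Suc j})"
    by auto
  then have "card {c \<in> cells \<gamma>. case_prod T c \<in> Suc ` J} = (\<Sum>j\<in>J. content \<gamma> T j)"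
    unfolding content_def using finJ by (simp only:) (rule card_UN_disjoint, auto)
  also have "\<dots> = (\<Sum>j\<in>J. \<epsilon> ! j)"
  proof (rule sum.cong)
    show "content \<gamma> T j = \<epsilon> ! j" if "j \<in> J" for j
      using fun_cong[OF c, of j] that J unfolding nth0_def by auto
  qed simp
  finally show ?thesis .
qed

lemma comp_tableaux_card_entries_in_le:
  assumes T: "T \<in> comp_tableaux n \<gamma>" and finJ: "finite J" and W: "\<And>i. i < length \<gamma> \<Longrightarrow> \<gamma> ! i \<le> W"
  shows "card {c \<in> cells \<gamma>. case_prod T c \<in> Suc ` J} \<le> (\<Sum>col<W. min (card J) (parts_ge \<gamma> (Suc col)))"
proof -
  define rows where "rows col = {i. i < length \<gamma> \<and> col < \<gamma> ! i \<and> T i col \<in> Suc ` J}" for col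
  have fin_rows: "finite (rows col)" for col
    unfolding rows_def by auto
  have "(i, j) \<in> (\<Union>col<W. (\<lambda>i. (i, col)) ` rows col)"
    if "(i, j) \<in> cells \<gamma>" "T i j \<in> Suc ` J" for i j
  proof -
    have "j < W" using that W[of i] by simp
    moreover have "i \<in> rows j" using that unfolding rows_def by simp
    ultimately show ?thesis by blast
  qed
  then have "{c \<in> cells \<gamma>. case_prod T c \<in> Suc ` J} \<subseteq> (\<Union>col<W. (\<lambda>i. (i, col)) ` rows col)"
    by auto
  then have "card {c \<in> cells \<gamma>. case_prod T c \<in> Suc ` J} \<le> card (\<Union>col<W. (\<lambda>i. (i, col)) ` rows col)"
    using fin_rows by (intro card_mono) auto
  also have "\<dots> \<le> (\<Sum>col<W. card ((\<lambda>i. (i, col)) ` rows col))"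
    by (rule card_UN_le) simp
  also have "\<dots> \<le> (\<Sum>col<W. card (rows col))"
    by (intro sum_mono card_image_le fin_rows)
  also have "\<dots> \<le> (\<Sum>col<W. min (card J) (parts_ge \<gamma> (Suc col)))"
    unfolding rows_def by (intro sum_mono comp_tableaux_column_entries_le[OF T finJ])
  finally show ?thesis .
qed

text \<open>The content of a tableau is dominated by its shape: count the cells filled with letters of
  multiplicity at least \<open>v\<close> once by letters and once by columns.\<close>
lemma comp_tableaux_parts_ge_content_le:
  assumes T: "T \<in> comp_tableaux n \<gamma>" and c: "nth0 \<epsilon> = content \<gamma> T"
    and v: "1 \<le> v" and above: "\<And>w. v < w \<Longrightarrow> parts_ge \<epsilon> w = parts_ge \<gamma> w"
  shows "parts_ge \<epsilon> v \<le> parts_ge \<gamma> v"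
proof (rule ccontr)
  assume less: "\<not> parts_ge \<epsilon> v \<le> parts_ge \<gamma> v"
  define J where "J = {j. j < length \<epsilon> \<and> v \<le> \<epsilon> ! j}"
  define W where "W = sum_list \<epsilon> + sum_list \<gamma>"
  have J: "J \<subseteq> {..<length \<epsilon>}" and finJ: "finite J" and b: "card J = parts_ge \<epsilon> v"
    unfolding J_def parts_ge_def by auto
  have "(\<Sum>col<W. card {j\<in>J. col < \<epsilon> ! j}) = (\<Sum>j\<in>J. \<epsilon> ! j)"
    using finJ unfolding J_def W_def
    by (intro sum_eq_sum_card_less[symmetric]) (auto intro: elem_le_sum_list trans_le_add1)
  also have "\<dots> \<le> (\<Sum>col<W. min (card J) (parts_ge \<gamma> (Suc col)))"
    unfolding comp_tableaux_card_entries_in[OF T c J, symmetric] W_def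
    by (intro comp_tableaux_card_entries_in_le[OF T finJ]) (auto intro: elem_le_sum_list trans_le_add2)
  also have "\<dots> < (\<Sum>col<W. card {j\<in>J. col < \<epsilon> ! j})"
  proof (rule sum_strict_mono_ex1)
    show "\<forall>col\<in>{..<W}. min (card J) (parts_ge \<gamma> (Suc col)) \<le> card {j\<in>J. col < \<epsilon> ! j}"
    proof
      fix col
      show "min (card J) (parts_ge \<gamma> (Suc col)) \<le> card {j\<in>J. col < \<epsilon> ! j}"
      proof (cases "Suc col \<le> v")
        case True
        then have "{j\<in>J. col < \<epsilon> ! j} = J" unfolding J_def by auto
        then show ?thesis by simp
      next
        case False
        then have "{j\<in>J. col < \<epsilon> ! j} = {i. i < length \<epsilon> \<and> Suc col \<le> \<epsilon> ! i}"
          unfolding J_def by auto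
        then show ?thesis using above[of "Suc col"] False unfolding parts_ge_def by simp
      qed
    qed
    obtain j where "j \<in> J" using less b finJ by (metis card.empty ex_in_conv le0)
    then have "v - 1 < W" unfolding J_def W_def using v elem_le_sum_list[of j \<epsilon>] by auto
    moreover have "{j\<in>J. v - 1 < \<epsilon> ! j} = J" unfolding J_def using v by auto
    ultimately show "\<exists>col\<in>{..<W}. min (card J) (parts_ge \<gamma> (Suc col)) < card {j\<in>J. col < \<epsilon> ! j}"
      using less b v by (intro bexI[of _ "v - 1"]) auto
  qed simp
  finally show False by simp
qed

lemma parts_ge_filter: "parts_ge l w = length (filter (\<lambda>x. w \<le> x) l)"
  unfolding parts_ge_def by (simp add: length_filter_conv_card)

lemma parts_ge_perm: "parts_ge (part_of l) w = parts_ge l w"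
  unfolding parts_ge_filter part_of_def
  by (simp add: rev_filter[symmetric] filter_sort)

lemma nth0_antimono: "sorted (rev p) \<Longrightarrow> i \<le> j \<Longrightarrow> nth0 p j \<le> nth0 p i"
  unfolding nth0_def using sorted_rev_nth_mono by fastforce

lemma parts_ge_nth0: "1 \<le> w \<Longrightarrow> parts_ge l w = card {i. w \<le> nth0 l i}"
  unfolding parts_ge_def nth0_def by (rule arg_cong[where f = card]) auto

lemma lex_gt_imp_parts_ge:
  assumes p: "sorted (rev p)" and q: "sorted (rev q)" and "lex_gt p q"
  shows "\<exists>v\<ge>1. (\<forall>w>v. parts_ge p w = parts_ge q w) \<and> parts_ge q v < parts_ge p v"
proof -
  obtain t where t: "\<forall>i<t. nth0 p i = nth0 q i" "nth0 q t < nth0 p t"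
    using \<open>lex_gt p q\<close> unfolding lex_gt_def by blast
  define v where "v = nth0 p t"
  have v: "1 \<le> v" "nth0 q t < v" using t(2) unfolding v_def by simp_all
  have initial: "{i. w \<le> nth0 r i} = {i. i < t \<and> w \<le> nth0 r i}"
    if "sorted (rev r)" "nth0 r t < w" for r w
  proof -
    have "i < t" if "w \<le> nth0 r i" for i
      using nth0_antimono[OF \<open>sorted (rev r)\<close>, of t i] \<open>nth0 r t < w\<close> that by linarith
    then show ?thesis by auto
  qed
  have same: "{i. i < t \<and> w \<le> nth0 q i} = {i. i < t \<and> w \<le> nth0 p i}" for w
    using t(1) by auto
  have "parts_ge p w = parts_ge q w" if "v < w" for w
    using that v initial[OF p, of w] initial[OF q, of w] same[of w]
    by (simp add: parts_ge_nth0 v_def)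
  moreover have "parts_ge q v < parts_ge p v"
  proof -
    have "finite {i. v \<le> nth0 p i}"
      by (rule finite_subset[of _ "{..<length p}"]) (use v in \<open>auto simp: nth0_def split: if_splits\<close>)
    moreover have "{i. v \<le> nth0 q i} \<subset> {i. v \<le> nth0 p i}"
      using initial[OF q v(2)] same[of v] unfolding v_def by auto
    ultimately show ?thesis
      using v by (simp add: parts_ge_nth0 psubset_card_mono)
  qed
  ultimately show ?thesis using v by blast
qed

lemma lex_gt_part_of_imp_parts_ge:
  assumes "lex_gt (part_of \<epsilon>) (part_of \<gamma>)"
  shows "\<exists>v\<ge>1. (\<forall>w>v. parts_ge \<epsilon> w = parts_ge \<gamma> w) \<and> parts_ge \<gamma> v < parts_ge \<epsilon> v"
  using lex_gt_imp_parts_ge[OF _ _ assms] parts_ge_perm[unfolded part_of_def] by (simp add: part_of_def)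

lemma comp_tableaux_content_not_lex_gt_part:
  assumes "T \<in> comp_tableaux n \<gamma>" "nth0 \<epsilon> = content \<gamma> T"
  shows "\<not> lex_gt (part_of \<epsilon>) (part_of \<gamma>)"
  using lex_gt_part_of_imp_parts_ge comp_tableaux_parts_ge_content_le[OF assms] by (metis not_le)

lemma strict_mono_bounded_eq_Suc:
  fixes f :: "nat \<Rightarrow> nat"
  assumes mono: "\<And>i j. i < j \<Longrightarrow> j < k \<Longrightarrow> f i < f j"
    and range: "\<And>i. i < k \<Longrightarrow> 1 \<le> f i \<and> f i \<le> k" and "i < k"
  shows "f i = Suc i"
proof -
  have gap: "f i + (j - i) \<le> f j" if "i \<le> j" "j < k" for i j
    using that
  proof (induction j rule: dec_induct)
    case (step j)
    then show ?case using mono[of j "Suc j"] by simp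
  qed simp
  have "i \<le> k - 1" "k - 1 < k" using \<open>i < k\<close> by simp_all
  from gap[OF this] gap[of 0 i] range[of 0] range[of "k - 1"] \<open>i < k\<close> show ?thesis
    by arith
qed

lemma comp_tableaux_first_column_eq:
  assumes T: "T \<in> comp_tableaux n \<gamma>" and c: "nth0 \<epsilon> = content \<gamma> T"
    and len: "length \<epsilon> = length \<gamma>" and comp: "is_comp \<gamma>" and i: "i < length \<gamma>"
  shows "T i 0 = Suc i"
proof (rule strict_mono_bounded_eq_Suc[OF _ _ i])
  have "(i, 0) \<in> cells \<gamma>" if "i < length \<gamma>" for i
    using comp that unfolding is_comp_def by (simp add: nth_mem)
  then show "\<And>i. i < length \<gamma> \<Longrightarrow> 1 \<le> T i 0 \<and> T i 0 \<le> length \<gamma>"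
    using comp_tableaux_entry_le_length[OF T c] len by metis
qed (rule comp_tableaux_first_column[OF T])

lemma comp_tableaux_entry_le_row:
  assumes T: "T \<in> comp_tableaux n \<gamma>" and c: "nth0 \<epsilon> = content \<gamma> T"
    and len: "length \<epsilon> = length \<gamma>" and comp: "is_comp \<gamma>" and cell: "(i, j) \<in> cells \<gamma>"
  shows "T i j \<le> Suc i"
  using comp_tableaux_row_antimono[OF T, of i 0 j] comp_tableaux_first_column_eq[OF T c len comp, of i] cell
  by simp

lemma comp_tableaux_row_content_le:
  assumes T: "T \<in> comp_tableaux n \<gamma>" and c: "nth0 \<epsilon> = content \<gamma> T"
    and len: "length \<epsilon> = length \<gamma>" and comp: "is_comp \<gamma>" and r: "r < length \<gamma>"
    and below: "\<And>i j. r < i \<Longrightarrow> i < length \<gamma> \<Longrightarrow> j < \<gamma> ! i \<Longrightarrow> T i j = Suc i"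
  shows "\<epsilon> ! r \<le> \<gamma> ! r" and "\<epsilon> ! r = \<gamma> ! r \<Longrightarrow> j < \<gamma> ! r \<Longrightarrow> T r j = Suc r"
proof -
  define S where "S = {c \<in> cells \<gamma>. case_prod T c = Suc r}"
  have card_S: "card S = \<epsilon> ! r"
    using fun_cong[OF c, of r] r len unfolding S_def content_def nth0_def by simp
  \<comment> \<open>entries in rows above \<open>r\<close> are at most \<open>r\<close>, those below are already fixed\<close>
  have sub: "S \<subseteq> {r} \<times> {..<\<gamma> ! r}"
  proof
    fix x assume "x \<in> S"
    then obtain i j where x: "x = (i, j)" "(i, j) \<in> cells \<gamma>" "T i j = Suc r"
      unfolding S_def by (cases x) auto
    then have "r \<le> i" using comp_tableaux_entry_le_row[OF T c len comp, of i j] by simp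
    moreover have "\<not> r < i" using below[of i j] x by auto
    ultimately show "x \<in> {r} \<times> {..<\<gamma> ! r}" using x by auto
  qed
  then show "\<epsilon> ! r \<le> \<gamma> ! r"
    using card_mono[OF _ sub] card_S by simp
  assume "\<epsilon> ! r = \<gamma> ! r" and "j < \<gamma> ! r"
  then have "S = {r} \<times> {..<\<gamma> ! r}"
    using card_subset_eq[OF _ sub] card_S by simp
  then have "(r, j) \<in> S" using \<open>j < \<gamma> ! r\<close> by simp
  then show "T r j = Suc r" unfolding S_def by simp
qed

lemma comp_tableaux_lower_rows_eq:
  assumes T: "T \<in> comp_tableaux n \<gamma>" and c: "nth0 \<epsilon> = content \<gamma> T"
    and len: "length \<epsilon> = length \<gamma>" and comp: "is_comp \<gamma>"
    and eq: "\<And>i. r \<le> i \<Longrightarrow> i < length \<gamma> \<Longrightarrow> \<epsilon> ! i = \<gamma> ! i"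
  shows "r \<le> i \<Longrightarrow> i < length \<gamma> \<Longrightarrow> j < \<gamma> ! i \<Longrightarrow> T i j = Suc i"
proof (induction "length \<gamma> - i" arbitrary: i j rule: less_induct)
  case (less i)
  have below: "T i' j' = Suc i'" if "i < i'" "i' < length \<gamma>" "j' < \<gamma> ! i'" for i' j'
    using less.hyps[of i' j'] less.prems(1) that by simp
  show ?case
    using comp_tableaux_row_content_le(2)[OF T c len comp less.prems(2) below] eq less.prems
    by simp
qed

lemma lex_gt_revE:
  assumes "lex_gt (rev l) (rev m)" "length l = length m"
  obtains r where "r < length l" "\<And>i. r < i \<Longrightarrow> i < length l \<Longrightarrow> l ! i = m ! i" "m ! r < l ! r"
proof -
  let ?k = "length l"
  obtain t where t: "\<forall>i<t. nth0 (rev l) i = nth0 (rev m) i" "nth0 (rev m) t < nth0 (rev l) t"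
    using assms(1) unfolding lex_gt_def by blast
  have nth0_rev: "nth0 (rev xs) s = xs ! (?k - 1 - s)" if "length xs = ?k" "s < ?k" for xs s
    using that unfolding nth0_def by (simp add: rev_nth)
  have "t < ?k" using t(2) unfolding nth0_def by (auto split: if_splits)
  show ?thesis
  proof (rule that[of "?k - 1 - t"])
    show "l ! i = m ! i" if "?k - 1 - t < i" "i < ?k" for i
      using t(1)[rule_format, of "?k - 1 - i"] nth0_rev[of l "?k - 1 - i"] nth0_rev[of m "?k - 1 - i"]
        that assms(2) by simp
  qed (use t(2) nth0_rev[of l t] nth0_rev[of m t] \<open>t < ?k\<close> assms(2) in auto)
qed

lemma comp_tableaux_content_not_lex_gt_rev:
  assumes T: "T \<in> comp_tableaux n \<gamma>" and c: "nth0 \<epsilon> = content \<gamma> T"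
    and len: "length \<epsilon> = length \<gamma>" and comp: "is_comp \<gamma>"
  shows "\<not> lex_gt (rev \<epsilon>) (rev \<gamma>)"
proof
  assume "lex_gt (rev \<epsilon>) (rev \<gamma>)"
  then obtain r where r: "r < length \<gamma>" "\<And>i. r < i \<Longrightarrow> i < length \<gamma> \<Longrightarrow> \<epsilon> ! i = \<gamma> ! i"
    and less: "\<gamma> ! r < \<epsilon> ! r"
    using len by (auto elim: lex_gt_revE)
  have "T i j = Suc i" if "r < i" "i < length \<gamma>" "j < \<gamma> ! i" for i j
    using comp_tableaux_lower_rows_eq[OF T c len comp, of "Suc r"] r that by simp
  then have "\<epsilon> ! r \<le> \<gamma> ! r"
    using comp_tableaux_row_content_le(1)[OF T c len comp r(1)] by blast
  with less show False by simp
qed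

definition row_tableau :: "nat list \<Rightarrow> nat \<Rightarrow> nat \<Rightarrow> nat" where
  "row_tableau \<gamma> i j = (if (i, j) \<in> cells \<gamma> then Suc i else 0)"

lemma row_tableau_in_comp_tableaux:
  assumes "is_comp \<gamma>" "length \<gamma> \<le> n"
  shows "row_tableau \<gamma> \<in> comp_tableaux n \<gamma>"
  using assms unfolding comp_tableaux_def row_tableau_def is_comp_def by (auto simp: nth_mem)

lemma content_row_tableau: "content \<gamma> (row_tableau \<gamma>) = nth0 \<gamma>"
proof
  fix m
  have "{c \<in> cells \<gamma>. case_prod (row_tableau \<gamma>) c = Suc m} = (if m < length \<gamma> then {m} \<times> {..<\<gamma> ! m} else {})"
    unfolding row_tableau_def by auto
  then show "content \<gamma> (row_tableau \<gamma>) m = nth0 \<gamma> m"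
    unfolding content_def nth0_def by simp
qed

lemma row_tableau_unique:
  assumes T: "T \<in> comp_tableaux n \<gamma>" and c: "nth0 \<gamma> = content \<gamma> T" and comp: "is_comp \<gamma>"
  shows "T = row_tableau \<gamma>"
proof (intro ext)
  fix i j
  show "T i j = row_tableau \<gamma> i j"
    using comp_tableaux_lower_rows_eq[OF T c refl comp, of 0 i j] comp_tableaux_outside[OF T, of i j]
    unfolding row_tableau_def by auto
qed

lemma S_coeff_diag:
  assumes "is_comp \<gamma>" "length \<gamma> \<le> n"
  shows "S_coeff n \<gamma> (nth0 \<gamma>) = 1"
proof -
  have "{T \<in> comp_tableaux n \<gamma>. content \<gamma> T = nth0 \<gamma>} = {row_tableau \<gamma>}"
    using row_tableau_in_comp_tableaux[OF assms] content_row_tableau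
      row_tableau_unique[OF _ _ assms(1)] by fastforce
  then show ?thesis unfolding S_coeff_content by simp
qed

lemma is_comp_part_of: "is_comp l \<Longrightarrow> is_comp (part_of l)"
  unfolding part_of_def is_comp_def by simp

lemma is_comp_rev: "is_comp l \<Longrightarrow> is_comp (rev l)"
  unfolding is_comp_def by simp

lemma S_coeff_nonzeroE:
  assumes "S_coeff n \<gamma> e \<noteq> 0"
  obtains T where "T \<in> comp_tableaux n \<gamma>" "content \<gamma> T = e"
  using assms unfolding S_coeff_content by (metis (mono_tags, lifting) card.empty empty_Collect_eq)

lemma S_coeff_nth0_size_eq:
  assumes "length \<epsilon> \<le> n" "S_coeff n \<gamma> (nth0 \<epsilon>) \<noteq> 0"
  shows "sum_list \<epsilon> = sum_list \<gamma>"
proof -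
  obtain T where "T \<in> comp_tableaux n \<gamma>" "content \<gamma> T = nth0 \<epsilon>"
    using assms(2) by (rule S_coeff_nonzeroE)
  then show ?thesis using comp_tableaux_content_size assms(1) by metis
qed

lemma S_coeff_triangular:
  assumes "is_comp \<gamma>" "is_comp \<epsilon>" "length \<epsilon> \<le> n" "S_coeff n \<gamma> (nth0 \<epsilon>) \<noteq> 0"
  shows "\<gamma> = \<epsilon> \<or> revlex_gt \<gamma> \<epsilon>"
proof -
  obtain T where T: "T \<in> comp_tableaux n \<gamma>" and c: "nth0 \<epsilon> = content \<gamma> T"
    using assms(4) by (metis S_coeff_nonzeroE)
  have size: "sum_list \<epsilon> = sum_list \<gamma>"
    using comp_tableaux_content_size[OF T c assms(3)] .
  consider "lex_gt (part_of \<gamma>) (part_of \<epsilon>)" | "part_of \<gamma> = part_of \<epsilon>"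
    using lex_gt_cases[of "part_of \<gamma>" "part_of \<epsilon>"] comp_tableaux_content_not_lex_gt_part[OF T c]
      nth0_eq_imp_eq is_comp_part_of assms(1,2) by blast
  then show ?thesis
  proof cases
    case 1
    then show ?thesis unfolding revlex_gt_def using assms(1,2) size by simp
  next
    case 2
    then have "length \<epsilon> = length \<gamma>" unfolding part_of_def by (metis length_rev length_sort)
    then have "\<not> lex_gt (rev \<epsilon>) (rev \<gamma>)"
      using comp_tableaux_content_not_lex_gt_rev[OF T c _ assms(1)] by blast
    then have "lex_gt (rev \<gamma>) (rev \<epsilon>) \<or> rev \<gamma> = rev \<epsilon>"
      using lex_gt_cases[of "rev \<gamma>" "rev \<epsilon>"] nth0_eq_imp_eq is_comp_rev assms(1,2) by blast
    then show ?thesis unfolding revlex_gt_def using 2 assms(1,2) size by auto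
  qed
qed

lemma S_coeff_nth0_eq_0_if_revlex_gt:
  assumes "is_comp \<gamma>" "is_comp \<epsilon>" "length \<epsilon> \<le> n" "revlex_gt \<epsilon> \<gamma>"
  shows "S_coeff n \<gamma> (nth0 \<epsilon>) = 0"
proof (rule ccontr)
  assume "S_coeff n \<gamma> (nth0 \<epsilon>) \<noteq> 0"
  then have "\<gamma> = \<epsilon> \<or> revlex_gt \<gamma> \<epsilon>" using S_coeff_triangular assms(1-3) by simp
  then show False using assms(4) revlex_gt_irrefl revlex_gt_trans by metis
qed

lemma comp_tableaux_map_entries:
  assumes T: "T \<in> comp_tableaux n \<gamma>" and mono: "strict_mono_on W g" and W: "\<And>i j. T i j \<in> W"
    and zero: "g 0 = 0" and range: "\<And>i j. (i, j) \<in> cells \<gamma> \<Longrightarrow> 1 \<le> g (T i j) \<and> g (T i j) \<le> n'"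
  shows "(\<lambda>i j. g (T i j)) \<in> comp_tableaux n' \<gamma>"
proof -
  have less: "g (T a b) < g (T c d) \<longleftrightarrow> T a b < T c d" for a b c d
    using strict_mono_on_less[OF mono W W] .
  have le: "g (T a b) \<le> g (T c d) \<longleftrightarrow> T a b \<le> T c d" for a b c d
    using strict_mono_on_less_eq[OF mono W W] .
  show ?thesis
    using T range zero unfolding comp_tableaux_def mem_Collect_eq less le by simp
qed

text \<open>Tableau entries are letters shifted by one (\<open>Suc m\<close> stands for \<open>x\<^sub>m\<^sub>+\<^sub>1\<close>, \<open>0\<close> marks the
  outside of the diagram); \<open>relabel_entry h\<close> applies the letter map \<open>h\<close> to an entry.\<close>
definition relabel_entry :: "(nat \<Rightarrow> nat) \<Rightarrow> nat \<Rightarrow> nat" where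
  "relabel_entry h v = (case v of 0 \<Rightarrow> 0 | Suc m \<Rightarrow> Suc (h m))"

lemma relabel_entry_simps [simp]:
  "relabel_entry h 0 = 0" "relabel_entry h (Suc m) = Suc (h m)"
  unfolding relabel_entry_def by simp_all

lemma strict_mono_on_relabel_entry:
  "strict_mono_on V h \<Longrightarrow> strict_mono_on (insert 0 (Suc ` V)) (relabel_entry h)"
  by (auto intro!: strict_mono_onI dest: strict_mono_onD)

lemma strict_mono_on_the_inv_into:
  fixes h :: "'a::linorder \<Rightarrow> 'b::linorder"
  assumes "strict_mono_on V h"
  shows "strict_mono_on (h ` V) (the_inv_into V h)"
proof (rule strict_mono_onI)
  fix x y assume "x \<in> h ` V" "y \<in> h ` V" "x < y"
  then show "the_inv_into V h x < the_inv_into V h y"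
    using strict_mono_on_imp_inj_on[OF assms] strict_mono_on_less[OF assms]
    by (auto simp: the_inv_into_f_f)
qed

lemma comp_tableaux_entries_in_support:
  assumes T: "T \<in> comp_tableaux n \<gamma>" and supp: "\<And>m. content \<gamma> T m \<noteq> 0 \<Longrightarrow> m \<in> V"
  shows "T i j \<in> insert 0 (Suc ` V)"
proof (cases "(i, j) \<in> cells \<gamma>")
  case True
  then obtain m where "T i j = Suc m" "0 < content \<gamma> T m"
    using comp_tableaux_entry_content[OF T] by blast
  then show ?thesis using supp by auto
qed (simp add: comp_tableaux_outside[OF T])

lemma relabel_comp_tableaux:
  assumes mono: "strict_mono_on V h" and hV: "h ` V \<subseteq> {..<n}"
    and supp': "\<And>m. e' m \<noteq> 0 \<Longrightarrow> m \<in> V" and supp: "\<And>m. e m \<noteq> 0 \<Longrightarrow> m \<in> h ` V"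
    and e_h: "\<And>m. m \<in> V \<Longrightarrow> e (h m) = e' m"
    and T: "T \<in> comp_tableaux n \<gamma>" and c: "content \<gamma> T = e'"
  shows "(\<lambda>i j. relabel_entry h (T i j)) \<in> comp_tableaux n \<gamma>"
    and "content \<gamma> (\<lambda>i j. relabel_entry h (T i j)) = e"
proof -
  have W: "T i j \<in> insert 0 (Suc ` V)" for i j
    using comp_tableaux_entries_in_support[OF T] supp' c by blast
  show "(\<lambda>i j. relabel_entry h (T i j)) \<in> comp_tableaux n \<gamma>"
  proof (rule comp_tableaux_map_entries[OF T strict_mono_on_relabel_entry[OF mono] W])
    show "1 \<le> relabel_entry h (T i j) \<and> relabel_entry h (T i j) \<le> n" if "(i, j) \<in> cells \<gamma>" for i j
      using W[of i j] comp_tableaux_range[OF T that] hV by (auto simp: Suc_le_eq)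
  qed simp
  show "content \<gamma> (\<lambda>i j. relabel_entry h (T i j)) = e"
  proof
    fix m
    show "content \<gamma> (\<lambda>i j. relabel_entry h (T i j)) m = e m"
    proof (cases "m \<in> h ` V")
      case True
      then obtain m' where m': "m' \<in> V" "m = h m'" by blast
      have "relabel_entry h (T i j) = Suc m \<longleftrightarrow> T i j = Suc m'" for i j
        using W[of i j] m' strict_mono_on_eq[OF mono] by auto
      then have "content \<gamma> (\<lambda>i j. relabel_entry h (T i j)) m = content \<gamma> T m'"
        unfolding content_def by (metis (no_types, lifting) case_prod_beta)
      then show ?thesis using c e_h m' by simp
    next
      case False
      then have "relabel_entry h (T i j) \<noteq> Suc m" for i j
        using W[of i j] by auto
      then have "{c \<in> cells \<gamma>. case_prod (\<lambda>i j. relabel_entry h (T i j)) c = Suc m} = {}"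
        by auto
      then show ?thesis using False supp unfolding content_def by (metis card.empty)
    qed
  qed
qed

lemma comp_tableaux_relabel_inverse:
  assumes "T \<in> comp_tableaux n \<gamma>" "\<And>m. content \<gamma> T m \<noteq> 0 \<Longrightarrow> m \<in> V"
    and "\<And>m. m \<in> V \<Longrightarrow> g (h m) = m"
  shows "(\<lambda>i j. relabel_entry g (relabel_entry h (T i j))) = T"
proof (intro ext)
  fix i j
  have "T i j \<in> insert 0 (Suc ` V)"
    using comp_tableaux_entries_in_support[OF assms(1,2)] .
  then show "relabel_entry g (relabel_entry h (T i j)) = T i j" using assms(3) by auto
qed

lemma S_coeff_reindex:
  assumes mono: "strict_mono_on V h" and V: "V \<subseteq> {..<n}" and hV: "h ` V \<subseteq> {..<n}"
    and supp': "\<And>m. e' m \<noteq> 0 \<Longrightarrow> m \<in> V" and supp: "\<And>m. e m \<noteq> 0 \<Longrightarrow> m \<in> h ` V"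
    and e_h: "\<And>m. m \<in> V \<Longrightarrow> e (h m) = e' m"
  shows "S_coeff n \<gamma> e = S_coeff n \<gamma> e'"
proof -
  define g where "g = the_inv_into V h"
  have inj: "inj_on h V" using strict_mono_on_imp_inj_on[OF mono] .
  have g_h: "g (h m) = m" if "m \<in> V" for m
    unfolding g_def using the_inv_into_f_f[OF inj that] .
  have h_g: "h (g m) = m" if "m \<in> h ` V" for m
    unfolding g_def using f_the_inv_into_f[OF inj that] .
  have mono_g: "strict_mono_on (h ` V) g"
    unfolding g_def by (rule strict_mono_on_the_inv_into[OF mono])
  have gV: "g ` h ` V = V" using g_h by force
  have e'_g: "e' (g m) = e m" if "m \<in> h ` V" for m
    using that e_h g_h by auto
  let ?A = "{T \<in> comp_tableaux n \<gamma>. content \<gamma> T = e}"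
  let ?A' = "{T \<in> comp_tableaux n \<gamma>. content \<gamma> T = e'}"
  have forward: "(\<lambda>i j. relabel_entry h (T i j)) \<in> ?A" if "T \<in> ?A'" for T
    using relabel_comp_tableaux[of V h n e' e, OF mono hV supp' supp e_h] that
    by blast
  have backward: "(\<lambda>i j. relabel_entry g (T i j)) \<in> ?A'" if "T \<in> ?A" for T
    using relabel_comp_tableaux[of "h ` V" g n e e', OF mono_g _ supp _ e'_g] that supp' gV V
    by blast
  have "bij_betw (\<lambda>T i j. relabel_entry h (T i j)) ?A' ?A"
  proof (rule bij_betw_byWitness[where f' = "\<lambda>T i j. relabel_entry g (T i j)"])
    show "\<forall>T\<in>?A'. (\<lambda>i j. relabel_entry g (relabel_entry h (T i j))) = T"
      using comp_tableaux_relabel_inverse[of _ n \<gamma> V g h] supp' g_h by blast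
    show "\<forall>T\<in>?A. (\<lambda>i j. relabel_entry h (relabel_entry g (T i j))) = T"
      using comp_tableaux_relabel_inverse[of _ n \<gamma> "h ` V" h g] supp h_g by blast
  qed (use forward backward in auto)
  then show ?thesis
    unfolding S_coeff_content by (simp add: bij_betw_same_card)
qed

lemma sorted_wrt_less_length_le:
  assumes "sorted_wrt (<) P" "set P \<subseteq> {..<n}"
  shows "length P \<le> n"
proof -
  have "length P = card (set P)"
    using assms(1) by (simp add: distinct_card strict_sorted_iff)
  also have "\<dots> \<le> n"
    using card_mono[OF _ assms(2)] by simp
  finally show ?thesis .
qed

lemma S_coeff_eq_nth0_map:
  assumes P: "sorted_wrt (<) P" and supp: "set P = {m. e m \<noteq> 0}" and Pn: "set P \<subseteq> {..<n}"
  shows "S_coeff n \<gamma> e = S_coeff n \<gamma> (nth0 (map e P))"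
proof (rule S_coeff_reindex)
  show mono: "strict_mono_on {..<length P} ((!) P)"
    using P by (auto intro!: strict_mono_onI simp: sorted_wrt_iff_nth_less)
  have image: "(!) P ` {..<length P} = set P"
    by (auto simp: in_set_conv_nth)
  then show "(!) P ` {..<length P} \<subseteq> {..<n}" using Pn by simp
  show "{..<length P} \<subseteq> {..<n}"
    using sorted_wrt_less_length_le[OF P Pn] by auto
  show "m \<in> {..<length P}" if "nth0 (map e P) m \<noteq> 0" for m
    using that by (simp add: nth0_def split: if_splits)
  show "m \<in> (!) P ` {..<length P}" if "e m \<noteq> 0" for m
    using that supp image by blast
  show "e (P ! m) = nth0 (map e P) m" if "m \<in> {..<length P}" for m
    using that by (simp add: nth0_def)
qed

lemma sum_nth_distinct_delta:
  fixes f :: "nat \<Rightarrow> 'a::comm_monoid_add"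
  assumes "distinct xs" "k < length xs" "length ys = length xs"
  shows "(\<Sum>j<length ys. if xs ! j = xs ! k then f j else 0) = f k"
proof -
  have "(\<Sum>j<length ys. if xs ! j = xs ! k then f j else 0) = (\<Sum>j<length ys. if j = k then f j else 0)"
    using assms by (intro sum.cong) (auto simp: nth_eq_iff_index_eq)
  then show ?thesis using assms(2,3) by simp
qed

text \<open>The exponent vector of the summand \<open>x\<^bsub>is!0\<^esub>^(\<beta>!0) \<cdots> x\<^bsub>is!(k-1)\<^esub>^(\<beta>!(k-1))\<close> of \<open>M_\<beta>\<close>.\<close>
definition index_exponent :: "nat list \<Rightarrow> nat list \<Rightarrow> nat \<Rightarrow> nat" where
  "index_exponent is \<beta> m = (\<Sum>j<length \<beta>. if is ! j = m then \<beta> ! j else 0)"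

lemma M_coeff_index_exponent:
  "M_coeff n \<beta> e = card {is. length is = length \<beta> \<and> sorted_wrt (<) is \<and> (\<forall>i\<in>set is. i < n)
     \<and> index_exponent is \<beta> = e}"
  unfolding M_coeff_def index_exponent_def
  by (intro arg_cong[where f = card] Collect_cong) (auto simp: fun_eq_iff)

lemma index_exponent_nth:
  "distinct is \<Longrightarrow> length is = length \<beta> \<Longrightarrow> k < length \<beta> \<Longrightarrow> index_exponent is \<beta> (is ! k) = \<beta> ! k"
  unfolding index_exponent_def by (intro sum_nth_distinct_delta) simp_all

lemma index_exponent_notin: "m \<notin> set is \<Longrightarrow> length is = length \<beta> \<Longrightarrow> index_exponent is \<beta> m = 0"
  unfolding index_exponent_def by (intro sum.neutral) (auto simp: nth_mem)

lemma index_exponent_eq_imp: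
  assumes comp: "is_comp \<beta>" and "is": "sorted_wrt (<) is" "length is = length \<beta>"
    and e: "index_exponent is \<beta> = e" and P: "sorted_wrt (<) P" "set P = {m. e m \<noteq> 0}"
  shows "is = P" and "\<beta> = map e P"
proof -
  have dist: "distinct is" using "is"(1) by (simp add: strict_sorted_iff)
  have "0 < \<beta> ! k" if "k < length \<beta>" for k
    using comp that unfolding is_comp_def by (simp add: nth_mem)
  then have "e m \<noteq> 0 \<longleftrightarrow> m \<in> set is" for m
    using e index_exponent_nth[OF dist "is"(2)] index_exponent_notin[OF _ "is"(2)] "is"(2)
    by (metis in_set_conv_nth less_irrefl)
  then show "is = P" using strict_sorted_equal[OF P(1) "is"(1)] P(2) by auto
  then show "\<beta> = map e P"
    using e index_exponent_nth[OF dist "is"(2)] "is"(2) by (intro nth_equalityI) auto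
qed

lemma index_exponent_map:
  assumes "distinct P" "set P = {m. e m \<noteq> 0}"
  shows "index_exponent P (map e P) = e"
proof
  fix m
  show "index_exponent P (map e P) m = e m"
  proof (cases "m \<in> set P")
    case True
    then obtain k where "k < length P" "m = P ! k" by (auto simp: in_set_conv_nth)
    then show ?thesis using index_exponent_nth[OF assms(1)] by simp
  next
    case False
    then show ?thesis using index_exponent_notin[of m P] assms(2) by auto
  qed
qed

lemma M_coeff_eq:
  assumes comp: "is_comp \<beta>" and P: "sorted_wrt (<) P" "set P = {m. e m \<noteq> 0}" and Pn: "set P \<subseteq> {..<n}"
  shows "M_coeff n \<beta> e = (if \<beta> = map e P then 1 else 0)"
proof -
  let ?S = "{is. length is = length \<beta> \<and> sorted_wrt (<) is \<and> (\<forall>i\<in>set is. i < n) \<and> index_exponent is \<beta> = e}"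
  have "is \<in> ?S \<longleftrightarrow> is = P \<and> \<beta> = map e P" for "is"
  proof
    assume "is \<in> ?S"
    then show "is = P \<and> \<beta> = map e P" using index_exponent_eq_imp[OF comp _ _ _ P] by blast
  next
    assume "is = P \<and> \<beta> = map e P"
    then show "is \<in> ?S"
      using P Pn index_exponent_map[of P e] by (auto simp: strict_sorted_iff)
  qed
  then have "?S = (if \<beta> = map e P then {P} else {})" by auto
  then show ?thesis unfolding M_coeff_index_exponent by simp
qed

lemma S_coeff_eq_0_outside:
  assumes "e m \<noteq> 0" "n \<le> m"
  shows "S_coeff n \<gamma> e = 0"
proof -
  have "content \<gamma> T m = 0" if "T \<in> comp_tableaux n \<gamma>" for T
    using comp_tableaux_range[OF that] assms(2) unfolding content_def by fastforce
  then have "{T \<in> comp_tableaux n \<gamma>. content \<gamma> T = e} = {}"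
    using assms(1) by auto
  then show ?thesis unfolding S_coeff_content by (metis card.empty)
qed

lemma M_coeff_eq_0_outside:
  assumes "e m \<noteq> 0" "n \<le> m"
  shows "M_coeff n \<beta> e = 0"
proof -
  have "index_exponent is \<beta> m = 0" if "\<forall>i\<in>set is. i < n" "length is = length \<beta>" for "is"
    using that assms(2) by (intro index_exponent_notin) auto
  then have "{is. length is = length \<beta> \<and> sorted_wrt (<) is \<and> (\<forall>i\<in>set is. i < n)
      \<and> index_exponent is \<beta> = e} = {}"
    using assms(1) by auto
  then show ?thesis unfolding M_coeff_index_exponent by (metis card.empty)
qed

lemma M_coeff_nth0:
  assumes "is_comp \<alpha>" "is_comp \<delta>" "length \<delta> \<le> n"
  shows "M_coeff n \<alpha> (nth0 \<delta>) = (if \<alpha> = \<delta> then 1 else 0)"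
proof -
  have "sorted_wrt (<) [0..<length \<delta>]" by (simp add: sorted_wrt_upt)
  moreover have "set [0..<length \<delta>] = {m. nth0 \<delta> m \<noteq> 0}"
    using assms(2) unfolding is_comp_def nth0_def by (auto simp: nth_mem)
  moreover have "set [0..<length \<delta>] \<subseteq> {..<n}" using assms(3) by auto
  moreover have "map (nth0 \<delta>) [0..<length \<delta>] = \<delta>"
    by (rule nth_equalityI) (auto simp: nth0_def)
  ultimately show ?thesis
    using M_coeff_eq[OF assms(1)] by metis
qed

lemma M_expansion_iff:
  assumes "is_comp \<alpha>"
  shows "M_expansion n \<alpha> K \<longleftrightarrow> finite {\<gamma>. K \<gamma> \<noteq> 0} \<and> (\<forall>\<gamma>. K \<gamma> \<noteq> 0 \<longrightarrow> is_comp \<gamma> \<and> length \<gamma> \<le> n)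
     \<and> (\<forall>\<delta>. is_comp \<delta> \<and> length \<delta> \<le> n \<longrightarrow>
          (\<Sum>\<gamma>\<in>{\<gamma>. K \<gamma> \<noteq> 0}. K \<gamma> * of_nat (S_coeff n \<gamma> (nth0 \<delta>))) = (if \<delta> = \<alpha> then 1 else 0))"
    (is "_ \<longleftrightarrow> ?fin \<and> ?supp \<and> ?eqs")
proof
  assume M: "M_expansion n \<alpha> K"
  have "(\<Sum>\<gamma>\<in>{\<gamma>. K \<gamma> \<noteq> 0}. K \<gamma> * of_nat (S_coeff n \<gamma> (nth0 \<delta>))) = (if \<delta> = \<alpha> then 1 else 0)"
    if "is_comp \<delta>" "length \<delta> \<le> n" for \<delta>
  proof -
    have "(\<Sum>\<gamma>\<in>{\<gamma>. K \<gamma> \<noteq> 0}. K \<gamma> * of_nat (S_coeff n \<gamma> (nth0 \<delta>))) = of_nat (M_coeff n \<alpha> (nth0 \<delta>))"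
      using M unfolding M_expansion_def by simp
    also have "\<dots> = (if \<delta> = \<alpha> then 1 else 0)"
      using M_coeff_nth0[OF assms that] by auto
    finally show ?thesis .
  qed
  with M show "?fin \<and> ?supp \<and> ?eqs" unfolding M_expansion_def by blast
next
  assume K: "?fin \<and> ?supp \<and> ?eqs"
  have "of_nat (M_coeff n \<alpha> e) = (\<Sum>\<gamma>\<in>{\<gamma>. K \<gamma> \<noteq> 0}. K \<gamma> * of_nat (S_coeff n \<gamma> e))" for e
  proof (cases "\<exists>m\<ge>n. e m \<noteq> 0")
    case True
    then obtain m where "e m \<noteq> 0" "n \<le> m" by blast
    then show ?thesis using M_coeff_eq_0_outside S_coeff_eq_0_outside by simp
  next
    case False
    then have "{m. e m \<noteq> 0} \<subseteq> {..<n}" by (auto simp: not_le)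
    then have fin: "finite {m. e m \<noteq> 0}" by (rule finite_subset) simp
    define P where "P = sorted_list_of_set {m. e m \<noteq> 0}"
    have P: "sorted_wrt (<) P" "set P = {m. e m \<noteq> 0}" "set P \<subseteq> {..<n}"
      unfolding P_def using fin \<open>{m. e m \<noteq> 0} \<subseteq> {..<n}\<close> by auto
    have comp: "is_comp (map e P)" unfolding is_comp_def using P(2) by auto
    show ?thesis
      using K comp sorted_wrt_less_length_le[OF P(1,3)] M_coeff_eq[OF assms P] S_coeff_eq_nth0_map[OF P]
      by simp
  qed
  with K show "M_expansion n \<alpha> K" unfolding M_expansion_def by blast
qed

lemma transp_revlex_gt_converse: "transp (\<lambda>\<delta> \<gamma>. revlex_gt \<gamma> \<delta>)"
  by (rule transpI) (rule revlex_gt_trans)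

lemma finite_comps_size: "finite {\<gamma>. is_comp \<gamma> \<and> length \<gamma> \<le> n \<and> sum_list \<gamma> = s}"
  by (rule finite_subset[OF _ finite_lists_length_le[of "{..s}" n]]) (auto simp: member_le_sum_list)

lemma sum_mult_superset_support:
  fixes K :: "'a \<Rightarrow> 'b::semiring_0"
  assumes "finite C" "{\<gamma>. K \<gamma> \<noteq> 0} \<subseteq> C"
  shows "(\<Sum>\<gamma>\<in>C. K \<gamma> * f \<gamma>) = (\<Sum>\<gamma>\<in>{\<gamma>. K \<gamma> \<noteq> 0}. K \<gamma> * f \<gamma>)"
  using assms by (intro sum.mono_neutral_right) auto

lemma S_coeff_unitriangular_on:
  assumes "C \<subseteq> {\<gamma>. is_comp \<gamma> \<and> length \<gamma> \<le> n}"
  shows "unitriangular_on C (\<lambda>\<delta> \<gamma>. revlex_gt \<gamma> \<delta>) (\<lambda>\<gamma> \<delta>. of_nat (S_coeff n \<gamma> (nth0 \<delta>)) :: rat)"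
  unfolding unitriangular_on_def
proof (intro conjI ballI impI)
  show "(of_nat (S_coeff n \<gamma> (nth0 \<gamma>)) :: rat) = 1" if "\<gamma> \<in> C" for \<gamma>
    using S_coeff_diag[of \<gamma> n] assms that by auto
  show "\<gamma> = \<delta> \<or> revlex_gt \<gamma> \<delta>"
    if "\<gamma> \<in> C" "\<delta> \<in> C" "(of_nat (S_coeff n \<gamma> (nth0 \<delta>)) :: rat) \<noteq> 0" for \<gamma> \<delta>
    using S_coeff_triangular[of \<gamma> \<delta> n] assms that by auto
qed

lemma M_expansion_sum_superset:
  assumes "is_comp \<alpha>" "M_expansion n \<alpha> K" "finite C" "{\<gamma>. K \<gamma> \<noteq> 0} \<subseteq> C"
    and "is_comp \<delta>" "length \<delta> \<le> n"
  shows "(\<Sum>\<gamma>\<in>C. K \<gamma> * of_nat (S_coeff n \<gamma> (nth0 \<delta>))) = (if \<delta> = \<alpha> then 1 else 0)"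
  using assms(2,5,6) sum_mult_superset_support[OF assms(3,4)] unfolding M_expansion_iff[OF assms(1)]
  by simp

lemma M_expansion_unique:
  assumes \<alpha>: "is_comp \<alpha>" and K1: "M_expansion n \<alpha> K1" and K2: "M_expansion n \<alpha> K2"
  shows "K1 = K2"
proof -
  define C where "C = {\<gamma>. K1 \<gamma> \<noteq> 0} \<union> {\<gamma>. K2 \<gamma> \<noteq> 0}"
  have fin: "finite C" and comps: "C \<subseteq> {\<gamma>. is_comp \<gamma> \<and> length \<gamma> \<le> n}"
    using K1 K2 unfolding C_def M_expansion_iff[OF \<alpha>] by auto
  have "K1 \<gamma> - K2 \<gamma> = 0" if "\<gamma> \<in> C" for \<gamma>
  proof (rule unitriangular_kernel[OF fin revlex_gt_irrefl transp_revlex_gt_converse S_coeff_unitriangular_on[OF comps],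
        where E = C])
    show "(\<Sum>\<gamma>\<in>C. (K1 \<gamma> - K2 \<gamma>) * of_nat (S_coeff n \<gamma> (nth0 \<epsilon>))) = 0" if "\<epsilon> \<in> C" for \<epsilon>
    proof -
      have "{\<gamma>. K1 \<gamma> \<noteq> 0} \<subseteq> C" "{\<gamma>. K2 \<gamma> \<noteq> 0} \<subseteq> C" unfolding C_def by blast+
      with M_expansion_sum_superset[OF \<alpha> K1 fin] M_expansion_sum_superset[OF \<alpha> K2 fin] comps that
      have "(\<Sum>\<gamma>\<in>C. K1 \<gamma> * of_nat (S_coeff n \<gamma> (nth0 \<epsilon>))) = (\<Sum>\<gamma>\<in>C. K2 \<gamma> * of_nat (S_coeff n \<gamma> (nth0 \<epsilon>)))"
        by auto
      then show ?thesis by (simp add: left_diff_distrib sum_subtractf)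
    qed
  qed (simp_all add: that)
  then show ?thesis
    unfolding C_def by (intro ext) (metis (mono_tags, lifting) UnCI mem_Collect_eq eq_iff_diff_eq_0)
qed

lemma M_expansion_unitriangular:
  assumes \<alpha>: "is_comp \<alpha>" "length \<alpha> \<le> n" and K: "M_expansion n \<alpha> K"
  shows "K \<alpha> = 1" and "revlex_gt \<gamma> \<alpha> \<Longrightarrow> K \<gamma> = 0"
proof -
  define C where "C = insert \<alpha> {\<gamma>. K \<gamma> \<noteq> 0}"
  define E where "E = {\<gamma> \<in> C. \<gamma> = \<alpha> \<or> revlex_gt \<gamma> \<alpha>}"
  have fin: "finite C" and comps: "C \<subseteq> {\<gamma>. is_comp \<gamma> \<and> length \<gamma> \<le> n}"
    and supp: "{\<gamma>. K \<gamma> \<noteq> 0} \<subseteq> C"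
    using K \<alpha> unfolding C_def M_expansion_iff[OF \<alpha>(1)] by auto
  note unitri = S_coeff_unitriangular_on[OF comps]
  \<comment> \<open>\<open>K\<close> minus the unit vector at \<open>\<alpha>\<close> is annihilated on the compositions \<open>\<succeq> \<alpha>\<close>\<close>
  have "K \<gamma> - (if \<gamma> = \<alpha> then 1 else 0) = 0" if "\<gamma> \<in> E" for \<gamma>
  proof (rule unitriangular_kernel[OF fin revlex_gt_irrefl transp_revlex_gt_converse unitri,
        where E = E and K = "\<lambda>\<gamma>. K \<gamma> - (if \<gamma> = \<alpha> then 1 else 0)"])
    show "\<gamma>' \<in> E" if "\<gamma> \<in> E" "\<gamma>' \<in> C" "revlex_gt \<gamma>' \<gamma>" for \<gamma> \<gamma>'
      using that revlex_gt_trans unfolding E_def by blast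
    show "(\<Sum>\<gamma>\<in>C. (K \<gamma> - (if \<gamma> = \<alpha> then 1 else 0)) * of_nat (S_coeff n \<gamma> (nth0 \<epsilon>))) = 0"
      if "\<epsilon> \<in> E" for \<epsilon>
    proof -
      have \<epsilon>: "\<epsilon> \<in> C" "\<epsilon> = \<alpha> \<or> revlex_gt \<epsilon> \<alpha>" using that unfolding E_def by auto
      have "\<alpha> \<in> C" unfolding C_def by simp
      have "(\<Sum>\<gamma>\<in>C. K \<gamma> * of_nat (S_coeff n \<gamma> (nth0 \<epsilon>))) = (if \<epsilon> = \<alpha> then 1 else 0)"
        using M_expansion_sum_superset[OF \<alpha>(1) K fin supp] comps \<epsilon>(1) by auto
      moreover have "(of_nat (S_coeff n \<alpha> (nth0 \<epsilon>)) :: rat) = (if \<epsilon> = \<alpha> then 1 else 0)"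
        using S_coeff_diag[OF \<alpha>] S_coeff_nth0_eq_0_if_revlex_gt[OF \<alpha>(1)] \<epsilon> comps by auto
      ultimately show ?thesis
        using fin \<open>\<alpha> \<in> C\<close> by (simp add: left_diff_distrib sum_subtractf if_distrib[of "\<lambda>x. x * _"] cong: if_cong)
    qed
  qed (use that in \<open>auto simp: E_def\<close>)
  moreover have "\<alpha> \<in> E" unfolding E_def C_def by simp
  ultimately show "K \<alpha> = 1" by fastforce
  assume "revlex_gt \<gamma> \<alpha>"
  then show "K \<gamma> = 0"
    using \<open>\<And>\<gamma>. \<gamma> \<in> E \<Longrightarrow> _\<close>[of \<gamma>] revlex_gt_irrefl unfolding E_def C_def by fastforce
qed

lemma M_expansion_exists:
  assumes \<alpha>: "is_comp \<alpha>" "length \<alpha> \<le> n"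
  shows "\<exists>K. M_expansion n \<alpha> K"
proof -
  define C where "C = {\<gamma>. is_comp \<gamma> \<and> length \<gamma> \<le> n \<and> sum_list \<gamma> = sum_list \<alpha>}"
  have fin: "finite C" unfolding C_def by (rule finite_comps_size)
  have comps: "C \<subseteq> {\<gamma>. is_comp \<gamma> \<and> length \<gamma> \<le> n}" unfolding C_def by auto
  note unitri = S_coeff_unitriangular_on[OF comps]
  have "\<alpha> \<in> C" using \<alpha> unfolding C_def by simp
  obtain K :: "nat list \<Rightarrow> rat" where out: "\<forall>\<gamma>. \<gamma> \<notin> C \<longrightarrow> K \<gamma> = 0"
    and eq: "\<forall>\<epsilon>\<in>C. (\<Sum>\<gamma>\<in>C. K \<gamma> * of_nat (S_coeff n \<gamma> (nth0 \<epsilon>))) = (if \<epsilon> = \<alpha> then 1 else 0)"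
    using unitriangular_solvable[OF fin revlex_gt_irrefl transp_revlex_gt_converse unitri \<open>\<alpha> \<in> C\<close>] by blast
  have supp: "{\<gamma>. K \<gamma> \<noteq> 0} \<subseteq> C" using out by blast
  have "(\<Sum>\<gamma>\<in>C. K \<gamma> * of_nat (S_coeff n \<gamma> (nth0 \<delta>))) = (if \<delta> = \<alpha> then 1 else 0)"
    if "is_comp \<delta>" "length \<delta> \<le> n" for \<delta>
  proof (cases "\<delta> \<in> C")
    case False
    have "S_coeff n \<gamma> (nth0 \<delta>) = 0" if "\<gamma> \<in> C" for \<gamma>
      using S_coeff_nth0_size_eq[of \<delta> n \<gamma>] that False \<open>is_comp \<delta>\<close> \<open>length \<delta> \<le> n\<close>
      unfolding C_def by auto
    moreover have "\<delta> \<noteq> \<alpha>" using False \<open>\<alpha> \<in> C\<close> by blast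
    ultimately show ?thesis by simp
  qed (use eq in simp)
  moreover have "finite {\<gamma>. K \<gamma> \<noteq> 0}" using fin supp by (rule finite_subset[rotated])
  moreover have "\<forall>\<gamma>. K \<gamma> \<noteq> 0 \<longrightarrow> is_comp \<gamma> \<and> length \<gamma> \<le> n" using supp comps by blast
  ultimately have "M_expansion n \<alpha> K"
    unfolding M_expansion_iff[OF \<alpha>(1)] sum_mult_superset_support[OF fin supp, symmetric] by blast
  then show ?thesis by blast
qed

theorem theorem5p3:
  fixes n :: nat and \<alpha> :: "nat list"
  assumes "1 \<le> n" and "is_comp \<alpha>" and "length \<alpha> \<le> n"
  shows "(\<exists>!K. M_expansion n \<alpha> K) \<and>
         (\<forall>K. M_expansion n \<alpha> K \<longrightarrow>
              K \<alpha> = 1 \<and> (\<forall>\<gamma>. revlex_gt \<gamma> \<alpha> \<longrightarrow> K \<gamma> = 0))"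
proof -
  have "\<exists>!K. M_expansion n \<alpha> K"
    using M_expansion_exists[OF assms(2,3)] M_expansion_unique[OF assms(2)] by blast
  moreover have "K \<alpha> = 1 \<and> (\<forall>\<gamma>. revlex_gt \<gamma> \<alpha> \<longrightarrow> K \<gamma> = 0)" if "M_expansion n \<alpha> K" for K
    using M_expansion_unitriangular[OF assms(2,3) that] by blast
  ultimately show ?thesis by blast
qed

end
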